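(* Let $K$ be a division ring and $M,N\ge2$ integers. Suppose that for every group $\Gamma=\Gamma_\pi\in\bigcup_{2\le m\le M,\ 2\le n\le N}\mathrm{ULIE}^{(2)}_K(m,n)$, with its canonical generators $1=a_0,a_1,\dots,a_{m-1}$ and $1=b_0,b_1,\dots,b_{n-1}$ and with $\phi:\Gamma\to\Gamma/N_{\mathrm{tor}}(\Gamma)$ the quotient map, we have $\phi(a_i)=\phi(a_{i'})$ for some $0\le i<i'\le m-1$ or $\phi(b_j)=\phi(b_{j'})$ for some $0\le j<j'\le n-1$. Then for every torsion-free group $G$ there are no $a,b\in K[G]$ with $\operatorname{rank}(a)=M$, $\operatorname{rank}(b)=N$ and $ab=1$.
   Context: $K$ is a nonzero division ring, $K[G]$ the group ring, rank = number of group elements with nonzero coefficient. For $m,n\ge2$ and a partition $\pi$ of $S_{m,n}=\{0,\dots,m-1\}\times\{0,\dots,n-1\}$, $(i,j)\sim_\pi(i',j')$ means same block; $\Gamma_\pi$ is the group with canonical generators $a_0,\dots,a_{m-1},b_0,\dots,b_{n-1}$ and relations $a_0=b_0=1$, $a_ib_j=a_{i'}b_{j'}$ whenever $(i,j)\sim_\pi(i',j')$. $\pi$ is nondegenerate if in $\Gamma_\pi$ the $a_i$ are pairwise distinct and the $b_j$ pairwise distinct. $\pi$ is realizable with nonzero $r_0,\dots,s_{n-1}\in K$ if for each block $E$, $\sum_{(i,j)\in E}r_is_j$ equals $1$ if $(0,0)\in E$, else $0$; ordering partitions by refinement, $\pi$ is minimally realizable over $K$ if for some choice of nonzero elements of $K$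 it is minimal among partitions realizable with them. An invariant subgrid of $\pi$ is $(R,C)$ with $0\in R\subseteq\{0,\dots,m-1\}$, $0\in C\subseteq\{0,\dots,n-1\}$, $|R|,|C|\ge2$, such that $(i,j)\in R\times C$ and $(i,j)\sim_\pi(i',j')$ imply $(i',j')\in R\times C$; it is proper if $|R|<m$ or $|C|<n$. $\mathrm{ULIE}^{(2)}_K(m,n)$ is the set of $\Gamma_\pi$ with $\pi$ nondegenerate, minimally realizable over $K$, and without proper invariant subgrids. For a group $\Gamma$, $N^{(1)}_{\mathrm{tor}}(\Gamma)$ is the smallest normal subgroup containing all elements of finite order; $N_{\mathrm{tor},1}=N^{(1)}_{\mathrm{tor}}(\Gamma)$, $N_{\mathrm{tor},k+1}=\phi_k^{-1}(N^{(1)}_{\mathrm{tor}}(\Gamma/N_{\mathrm{tor},k}))$ with $\phi_k$ the quotient map $\Gamma\to\Gamma/N_{\mathrm{tor},k}$, and $N_{\mathrm{tor}}(\Gamma)=\bigcup_kN_{\mathrm{tor},k}$. *)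

theory Defs
  imports "HOL-Algebra.Coset"
begin

definition supp :: "('g \<Rightarrow> 'k::zero) \<Rightarrow> 'g set" where
  "supp a = {g. a g \<noteq> 0}"

definition group_ring :: "('g, 'm) monoid_scheme \<Rightarrow> ('g \<Rightarrow> 'k::zero) set" where
  "group_ring G = {a. finite (supp a) \<and> supp a \<subseteq> carrier G}"

definition gr_mult :: "('g, 'm) monoid_scheme \<Rightarrow> ('g \<Rightarrow> 'k::ring_1) \<Rightarrow> ('g \<Rightarrow> 'k) \<Rightarrow> 'g \<Rightarrow> 'k" where
  "gr_mult G a b = (\<lambda>g. if g \<in> carrier G
      then (\<Sum>h\<in>supp a. a h * b (inv\<^bsub>G\<^esub> h \<otimes>\<^bsub>G\<^esub> g)) else 0)"

definition gr_one :: "('g, 'm) monoid_scheme \<Rightarrow> 'g \<Rightarrow> 'k::ring_1" where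
  "gr_one G = (\<lambda>g. if g = \<one>\<^bsub>G\<^esub> then 1 else 0)"

definition gr_rank :: "('g \<Rightarrow> 'k::zero) \<Rightarrow> nat" where
  "gr_rank a = card (supp a)"

definition torsion_free :: "('g, 'm) monoid_scheme \<Rightarrow> bool" where
  "torsion_free G \<longleftrightarrow> (\<forall>x\<in>carrier G. \<forall>n::nat. n > 0 \<and> x [^]\<^bsub>G\<^esub> n = \<one>\<^bsub>G\<^esub> \<longrightarrow> x = \<one>\<^bsub>G\<^esub>)"

definition torsion_elems :: "('g, 'm) monoid_scheme \<Rightarrow> 'g set" where
  "torsion_elems G = {x \<in> carrier G. \<exists>n::nat. n > 0 \<and> x [^]\<^bsub>G\<^esub> n = \<one>\<^bsub>G\<^esub>}"

definition N1tor :: "('g, 'm) monoid_scheme \<Rightarrow> 'g set" where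
  "N1tor G = \<Inter> {H. H \<lhd> G \<and> torsion_elems G \<subseteq> H}"

text \<open>\<open>Ntor_seq G k\<close> is \<open>N_{tor,k}\<close> for \<open>k \<ge> 1\<close>; the preimage of a set of cosets under the
  quotient map \<open>G \<rightarrow> G Mod N\<close> is the union of those cosets.\<close>
fun Ntor_seq :: "('g, 'm) monoid_scheme \<Rightarrow> nat \<Rightarrow> 'g set" where
  "Ntor_seq G 0 = {\<one>\<^bsub>G\<^esub>}"
| "Ntor_seq G (Suc 0) = N1tor G"
| "Ntor_seq G (Suc (Suc k)) = \<Union> (N1tor (G Mod (Ntor_seq G (Suc k))))"

definition Ntor :: "('g, 'm) monoid_scheme \<Rightarrow> 'g set" where
  "Ntor G = (\<Union>k\<in>{1..}. Ntor_seq G k)"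

definition phi_tor :: "('g, 'm) monoid_scheme \<Rightarrow> 'g \<Rightarrow> 'g set" where
  "phi_tor G x = Ntor G #>\<^bsub>G\<^esub> x"

definition S_grid :: "nat \<Rightarrow> nat \<Rightarrow> (nat \<times> nat) set" where
  "S_grid m n = {0..<m} \<times> {0..<n}"

definition is_partition :: "nat \<Rightarrow> nat \<Rightarrow> ((nat \<times> nat) \<times> (nat \<times> nat)) set \<Rightarrow> bool" where
  "is_partition m n P \<longleftrightarrow> equiv (S_grid m n) P"

text \<open>Words over the generators: \<open>(False, Inl i)\<close> is \<open>a_i\<close>, \<open>(True, Inl i)\<close> is \<open>a_i\<^sup>-\<^sup>1\<close>,
  \<open>Inr j\<close> similarly for \<open>b_j\<close>.\<close>
type_synonym word = "(bool \<times> (nat + nat)) list"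

definition letter_ok :: "nat \<Rightarrow> nat \<Rightarrow> bool \<times> (nat + nat) \<Rightarrow> bool" where
  "letter_ok m n l = (case snd l of Inl i \<Rightarrow> i < m | Inr j \<Rightarrow> j < n)"

definition word_ok :: "nat \<Rightarrow> nat \<Rightarrow> word \<Rightarrow> bool" where
  "word_ok m n w \<longleftrightarrow> (\<forall>l\<in>set w. letter_ok m n l)"

inductive pres_eq :: "nat \<Rightarrow> nat \<Rightarrow> ((nat \<times> nat) \<times> (nat \<times> nat)) set \<Rightarrow> word \<Rightarrow> word \<Rightarrow> bool"
  for m n P where
  refl: "word_ok m n w \<Longrightarrow> pres_eq m n P w w"
| sym: "pres_eq m n P u w \<Longrightarrow> pres_eq m n P w u"
| trans: "pres_eq m n P u v \<Longrightarrow> pres_eq m n P v w \<Longrightarrow> pres_eq m n P u w"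
| ctxt: "pres_eq m n P x y \<Longrightarrow> word_ok m n u \<Longrightarrow> word_ok m n v \<Longrightarrow>
         pres_eq m n P (u @ x @ v) (u @ y @ v)"
| cancel: "letter_ok m n (e, g) \<Longrightarrow> pres_eq m n P [(e, g), (\<not> e, g)] []"
| a0: "pres_eq m n P [(False, Inl 0)] []"
| b0: "pres_eq m n P [(False, Inr 0)] []"
| rel: "((i, j), (i', j')) \<in> P \<Longrightarrow>
        pres_eq m n P [(False, Inl i), (False, Inr j)] [(False, Inl i'), (False, Inr j')]"

definition word_class :: "nat \<Rightarrow> nat \<Rightarrow> ((nat \<times> nat) \<times> (nat \<times> nat)) set \<Rightarrow> word \<Rightarrow> word set" where
  "word_class m n P w = {w'. pres_eq m n P w w'}"

definition Gamma :: "nat \<Rightarrow> nat \<Rightarrow> ((nat \<times> nat) \<times> (nat \<times> nat)) set \<Rightarrow> word set monoid" where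
  "Gamma m n P = \<lparr> carrier = word_class m n P ` {w. word_ok m n w},
     mult = (\<lambda>X Y. word_class m n P ((SOME x. x \<in> X) @ (SOME y. y \<in> Y))),
     one = word_class m n P [] \<rparr>"

definition gen_a :: "nat \<Rightarrow> nat \<Rightarrow> ((nat \<times> nat) \<times> (nat \<times> nat)) set \<Rightarrow> nat \<Rightarrow> word set" where
  "gen_a m n P i = word_class m n P [(False, Inl i)]"

definition gen_b :: "nat \<Rightarrow> nat \<Rightarrow> ((nat \<times> nat) \<times> (nat \<times> nat)) set \<Rightarrow> nat \<Rightarrow> word set" where
  "gen_b m n P j = word_class m n P [(False, Inr j)]"

definition nondegenerate :: "nat \<Rightarrow> nat \<Rightarrow> ((nat \<times> nat) \<times> (nat \<times> nat)) set \<Rightarrow> bool" where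
  "nondegenerate m n P \<longleftrightarrow>
     (\<forall>i i'. i < m \<and> i' < m \<and> i \<noteq> i' \<longrightarrow> gen_a m n P i \<noteq> gen_a m n P i') \<and>
     (\<forall>j j'. j < n \<and> j' < n \<and> j \<noteq> j' \<longrightarrow> gen_b m n P j \<noteq> gen_b m n P j')"

definition realizable_with ::
  "nat \<Rightarrow> nat \<Rightarrow> ((nat \<times> nat) \<times> (nat \<times> nat)) set \<Rightarrow> (nat \<Rightarrow> 'k::ring_1) \<Rightarrow> (nat \<Rightarrow> 'k) \<Rightarrow> bool" where
  "realizable_with m n P r s \<longleftrightarrow>
     (\<forall>E \<in> S_grid m n // P.
        (\<Sum>(i, j)\<in>E. r i * s j) = (if (0, 0) \<in> E then 1 else 0))"

definition nonzero_params :: "nat \<Rightarrow> nat \<Rightarrow> (nat \<Rightarrow> 'k::zero) \<Rightarrow> (nat \<Rightarrow> 'k) \<Rightarrow> bool" where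
  "nonzero_params m n r s \<longleftrightarrow> (\<forall>i<m. r i \<noteq> 0) \<and> (\<forall>j<n. s j \<noteq> 0)"

definition minimally_realizable ::
  "'k::ring_1 itself \<Rightarrow> nat \<Rightarrow> nat \<Rightarrow> ((nat \<times> nat) \<times> (nat \<times> nat)) set \<Rightarrow> bool" where
  "minimally_realizable TYPE('k) m n P \<longleftrightarrow>
     (\<exists>(r :: nat \<Rightarrow> 'k) s. nonzero_params m n r s \<and> realizable_with m n P r s \<and>
        (\<forall>P'. is_partition m n P' \<and> P' \<subset> P \<longrightarrow> \<not> realizable_with m n P' r s))"

definition invariant_subgrid ::
  "nat \<Rightarrow> nat \<Rightarrow> ((nat \<times> nat) \<times> (nat \<times> nat)) set \<Rightarrow> nat set \<Rightarrow> nat set \<Rightarrow> bool" where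
  "invariant_subgrid m n P R C \<longleftrightarrow>
     0 \<in> R \<and> R \<subseteq> {0..<m} \<and> 0 \<in> C \<and> C \<subseteq> {0..<n} \<and> card R \<ge> 2 \<and> card C \<ge> 2 \<and>
     (\<forall>i j i' j'. (i, j) \<in> R \<times> C \<and> ((i, j), (i', j')) \<in> P \<longrightarrow> (i', j') \<in> R \<times> C)"

definition proper_subgrid :: "nat \<Rightarrow> nat \<Rightarrow> nat set \<Rightarrow> nat set \<Rightarrow> bool" where
  "proper_subgrid m n R C \<longleftrightarrow> card R < m \<or> card C < n"

definition ULIE2 :: "'k::ring_1 itself \<Rightarrow> nat \<Rightarrow> nat \<Rightarrow> ((nat \<times> nat) \<times> (nat \<times> nat)) set \<Rightarrow> bool" where
  "ULIE2 TYPE('k) m n P \<longleftrightarrow>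
     is_partition m n P \<and> nondegenerate m n P \<and> minimally_realizable TYPE('k) m n P \<and>
     \<not> (\<exists>R C. invariant_subgrid m n P R C \<and> proper_subgrid m n R C)"

end

theory Submission
  imports Defs "HOL-Combinatorics.Transposition"
begin

text \<open>Suppose \<open>a b = 1\<close> in \<open>K[G]\<close>. Enumerate \<open>supp a = {g\<^sub>0, \<dots>, g\<^sub>m\<^sub>-\<^sub>1}\<close> and
  \<open>supp b = {h\<^sub>0, \<dots>, h\<^sub>n\<^sub>-\<^sub>1}\<close> with \<open>g\<^sub>0 h\<^sub>0 = 1\<close>, and partition the grid \<open>S\<^sub>m\<^sub>,\<^sub>n\<close> by the
  value of \<open>g\<^sub>i h\<^sub>j\<close>. Comparing coefficients in \<open>a b = 1\<close> shows that this partition is realizable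
  with \<open>r\<^sub>i = a(g\<^sub>i)\<close>, \<open>s\<^sub>j = b(h\<^sub>j)\<close>; let \<open>\<pi>\<close> be a minimal realizable refinement of it.
  Then \<open>a\<^sub>i \<mapsto> g\<^sub>0\<^sup>-\<^sup>1 g\<^sub>i\<close>, \<open>b\<^sub>j \<mapsto> h\<^sub>j g\<^sub>0\<close> defines a homomorphism \<open>\<Gamma>\<^sub>\<pi> \<rightarrow> G\<close> that is injective on
  the generators. As \<open>G\<close> is torsion-free it kills \<open>N\<^sub>t\<^sub>o\<^sub>r(\<Gamma>\<^sub>\<pi>)\<close>, so the generators stay distinct
  in \<open>\<Gamma>\<^sub>\<pi>/N\<^sub>t\<^sub>o\<^sub>r(\<Gamma>\<^sub>\<pi>)\<close>. A proper invariant subgrid \<open>(R, C)\<close> of \<open>\<pi>\<close> would make the restrictions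
  of \<open>a\<close> to \<open>{g\<^sub>i | i \<in> R}\<close> and of \<open>b\<close> to \<open>{h\<^sub>j | j \<in> C}\<close> an inverse pair of smaller total rank,
  so for a counterexample of minimal \<open>m + n\<close> the group \<open>\<Gamma>\<^sub>\<pi>\<close> lies in \<open>ULIE\<^sup>(\<^sup>2\<^sup>)\<close>, contradicting
  the hypothesis.\<close>

section \<open>The groups \<open>\<Gamma>\<^sub>\<pi>\<close> and their universal property\<close>

lemma word_ok_Nil [simp]: "word_ok m n []"
  by (simp add: word_ok_def)

lemma word_ok_Cons [simp]: "word_ok m n (l # w) \<longleftrightarrow> letter_ok m n l \<and> word_ok m n w"
  by (simp add: word_ok_def)

lemma word_ok_append [simp]: "word_ok m n (u @ w) \<longleftrightarrow> word_ok m n u \<and> word_ok m n w"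
  by (auto simp: word_ok_def)

definition word_inv :: "word \<Rightarrow> word" where
  "word_inv w = rev (map (\<lambda>(e, g). (\<not> e, g)) w)"

lemma word_ok_word_inv: "word_ok m n w \<Longrightarrow> word_ok m n (word_inv w)"
  by (auto simp: word_ok_def word_inv_def letter_ok_def)

locale presentation =
  fixes m n :: nat and P :: "((nat \<times> nat) \<times> (nat \<times> nat)) set"
  assumes m_pos: "0 < m" and n_pos: "0 < n" and P_subset: "P \<subseteq> S_grid m n \<times> S_grid m n"
begin

lemma pres_eq_word_ok: "pres_eq m n P u w \<Longrightarrow> word_ok m n u \<and> word_ok m n w"
proof (induction rule: pres_eq.induct)
  case (rel i j i' j')
  then show ?case using P_subset by (auto simp: S_grid_def letter_ok_def)
qed (use m_pos n_pos in \<open>auto simp: letter_ok_def\<close>)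

lemma pres_eq_append:
  assumes "pres_eq m n P x u" and "pres_eq m n P y w"
  shows "pres_eq m n P (x @ y) (u @ w)"
proof -
  have "pres_eq m n P ([] @ x @ y) ([] @ u @ y)"
    using assms pres_eq_word_ok by (intro pres_eq.ctxt) auto
  moreover have "pres_eq m n P (u @ y @ []) (u @ w @ [])"
    using assms pres_eq_word_ok by (intro pres_eq.ctxt) auto
  ultimately show ?thesis by (auto intro: pres_eq.trans)
qed

lemma word_class_eqI: "pres_eq m n P u w \<Longrightarrow> word_class m n P u = word_class m n P w"
  unfolding word_class_def by (auto intro: pres_eq.trans pres_eq.sym)

lemma pres_eq_some_word_class: "word_ok m n w \<Longrightarrow> pres_eq m n P w (SOME x. x \<in> word_class m n P w)"
  unfolding word_class_def mem_Collect_eq by (rule someI) (rule pres_eq.refl)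

lemma Gamma_mult_word_class:
  "word_ok m n u \<Longrightarrow> word_ok m n w \<Longrightarrow>
     word_class m n P u \<otimes>\<^bsub>Gamma m n P\<^esub> word_class m n P w = word_class m n P (u @ w)"
  unfolding Gamma_def
  by (simp, rule word_class_eqI, rule pres_eq.sym, intro pres_eq_append pres_eq_some_word_class)

lemma pres_eq_word_inv_append: "word_ok m n w \<Longrightarrow> pres_eq m n P (word_inv w @ w) []"
proof (induction w)
  case Nil
  then show ?case by (simp add: word_inv_def pres_eq.refl)
next
  case (Cons l w)
  obtain e g where l: "l = (e, g)" by (cases l)
  have ok: "word_ok m n w" "letter_ok m n (e, g)" using Cons l by auto
  have "word_inv (l # w) @ l # w = word_inv w @ [(\<not> e, g), (\<not> \<not> e, g)] @ w"
    by (simp add: word_inv_def l)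
  moreover have "pres_eq m n P (word_inv w @ [(\<not> e, g), (\<not> \<not> e, g)] @ w) (word_inv w @ [] @ w)"
    using ok word_ok_word_inv by (intro pres_eq.ctxt pres_eq.cancel) (auto simp: letter_ok_def)
  ultimately show ?case using Cons ok by (auto intro: pres_eq.trans)
qed

lemma Gamma_group: "group (Gamma m n P)"
proof (rule groupI)
  let ?\<Gamma> = "Gamma m n P" and ?cls = "word_class m n P"
  have carrier: "carrier ?\<Gamma> = ?cls ` {w. word_ok m n w}" and one: "\<one>\<^bsub>?\<Gamma>\<^esub> = ?cls []"
    by (simp_all add: Gamma_def)
  note mult = Gamma_mult_word_class
  show "x \<otimes>\<^bsub>?\<Gamma>\<^esub> y \<in> carrier ?\<Gamma>" if "x \<in> carrier ?\<Gamma>" "y \<in> carrier ?\<Gamma>" for x y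
    using that carrier mult by auto
  show "\<one>\<^bsub>?\<Gamma>\<^esub> \<in> carrier ?\<Gamma>"
    using carrier one by auto
  show "x \<otimes>\<^bsub>?\<Gamma>\<^esub> y \<otimes>\<^bsub>?\<Gamma>\<^esub> z = x \<otimes>\<^bsub>?\<Gamma>\<^esub> (y \<otimes>\<^bsub>?\<Gamma>\<^esub> z)"
    if "x \<in> carrier ?\<Gamma>" "y \<in> carrier ?\<Gamma>" "z \<in> carrier ?\<Gamma>" for x y z
    using that carrier mult by auto
  show "\<one>\<^bsub>?\<Gamma>\<^esub> \<otimes>\<^bsub>?\<Gamma>\<^esub> x = x" if "x \<in> carrier ?\<Gamma>" for x
    using that carrier mult one by auto
  show "\<exists>y\<in>carrier ?\<Gamma>. y \<otimes>\<^bsub>?\<Gamma>\<^esub> x = \<one>\<^bsub>?\<Gamma>\<^esub>" if "x \<in> carrier ?\<Gamma>" for x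
  proof -
    obtain w where w: "word_ok m n w" "x = ?cls w" using \<open>x \<in> carrier ?\<Gamma>\<close> carrier by auto
    show ?thesis
      using w word_ok_word_inv pres_eq_word_inv_append carrier mult one
      by (intro bexI[of _ "?cls (word_inv w)"]) (auto simp: word_class_eqI)
  qed
qed

lemma gen_a_carrier: "i < m \<Longrightarrow> gen_a m n P i \<in> carrier (Gamma m n P)"
  by (auto simp: gen_a_def Gamma_def letter_ok_def)

lemma gen_b_carrier: "j < n \<Longrightarrow> gen_b m n P j \<in> carrier (Gamma m n P)"
  by (auto simp: gen_b_def Gamma_def letter_ok_def)

end

fun letter_eval :: "('g, 'm) monoid_scheme \<Rightarrow> (nat \<Rightarrow> 'g) \<Rightarrow> (nat \<Rightarrow> 'g) \<Rightarrow> bool \<times> (nat + nat) \<Rightarrow> 'g"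
  where
  "letter_eval G u v (e, Inl i) = (if e then inv\<^bsub>G\<^esub> (u i) else u i)"
| "letter_eval G u v (e, Inr j) = (if e then inv\<^bsub>G\<^esub> (v j) else v j)"

primrec word_eval :: "('g, 'm) monoid_scheme \<Rightarrow> (nat \<Rightarrow> 'g) \<Rightarrow> (nat \<Rightarrow> 'g) \<Rightarrow> word \<Rightarrow> 'g" where
  "word_eval G u v [] = \<one>\<^bsub>G\<^esub>"
| "word_eval G u v (l # w) = letter_eval G u v l \<otimes>\<^bsub>G\<^esub> word_eval G u v w"

locale presentation_hom = presentation m n P for m n P +
  fixes G :: "('g, 'm) monoid_scheme" and u v :: "nat \<Rightarrow> 'g"
  assumes group_G: "group G"
    and u_carrier: "\<And>i. i < m \<Longrightarrow> u i \<in> carrier G"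
    and v_carrier: "\<And>j. j < n \<Longrightarrow> v j \<in> carrier G"
    and u0: "u 0 = \<one>\<^bsub>G\<^esub>" and v0: "v 0 = \<one>\<^bsub>G\<^esub>"
    and relations: "\<And>i j i' j'. ((i, j), (i', j')) \<in> P \<Longrightarrow> u i \<otimes>\<^bsub>G\<^esub> v j = u i' \<otimes>\<^bsub>G\<^esub> v j'"
begin

interpretation G: group G by (rule group_G)

lemma letter_eval_carrier: "letter_ok m n (e, g) \<Longrightarrow> letter_eval G u v (e, g) \<in> carrier G"
  by (cases g) (auto simp: letter_ok_def u_carrier v_carrier)

lemma word_eval_carrier: "word_ok m n w \<Longrightarrow> word_eval G u v w \<in> carrier G"
  by (induction w) (auto simp: letter_eval_carrier)

lemma word_eval_append:
  "word_ok m n x \<Longrightarrow> word_ok m n y \<Longrightarrow>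
     word_eval G u v (x @ y) = word_eval G u v x \<otimes>\<^bsub>G\<^esub> word_eval G u v y"
  by (induction x) (auto simp: G.m_assoc letter_eval_carrier word_eval_carrier)

lemma word_eval_pres_eq: "pres_eq m n P x y \<Longrightarrow> word_eval G u v x = word_eval G u v y"
proof (induction rule: pres_eq.induct)
  case (ctxt x y u' v')
  then show ?case using pres_eq_word_ok[OF ctxt.hyps(1)] by (simp add: word_eval_append)
next
  case (cancel e g)
  then show ?case by (cases g) (auto simp: letter_ok_def u_carrier v_carrier)
next
  case (rel i j i' j')
  then have "i < m" "j < n" "i' < m" "j' < n" using P_subset by (auto simp: S_grid_def)
  then show ?case using relations[OF rel] by (simp add: u_carrier v_carrier)
qed (simp_all add: u0 v0)

definition induced_hom :: "word set \<Rightarrow> 'g" where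
  "induced_hom X = word_eval G u v (SOME x. x \<in> X)"

lemma induced_hom_word_class: "word_ok m n w \<Longrightarrow> induced_hom (word_class m n P w) = word_eval G u v w"
  unfolding induced_hom_def using pres_eq_some_word_class word_eval_pres_eq by metis

lemma induced_hom_hom: "induced_hom \<in> hom (Gamma m n P) G"
proof (rule homI)
  fix X assume "X \<in> carrier (Gamma m n P)"
  then obtain w where "word_ok m n w" "X = word_class m n P w" by (auto simp: Gamma_def)
  then show "induced_hom X \<in> carrier G" by (simp add: induced_hom_word_class word_eval_carrier)
next
  fix X Y assume "X \<in> carrier (Gamma m n P)" "Y \<in> carrier (Gamma m n P)"
  then obtain x y where "word_ok m n x" "X = word_class m n P x" "word_ok m n y" "Y = word_class m n P y"
    by (auto simp: Gamma_def)
  then show "induced_hom (X \<otimes>\<^bsub>Gamma m n P\<^esub> Y) = induced_hom X \<otimes>\<^bsub>G\<^esub> induced_hom Y"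
    by (simp add: Gamma_mult_word_class induced_hom_word_class word_eval_append)
qed

lemma induced_hom_gen_a: "i < m \<Longrightarrow> induced_hom (gen_a m n P i) = u i"
  by (simp add: gen_a_def induced_hom_word_class letter_ok_def u_carrier)

lemma induced_hom_gen_b: "j < n \<Longrightarrow> induced_hom (gen_b m n P j) = v j"
  by (simp add: gen_b_def induced_hom_word_class letter_ok_def v_carrier)

lemma nondegenerate_if_inj:
  assumes "inj_on u {0..<m}" and "inj_on v {0..<n}"
  shows "nondegenerate m n P"
  unfolding nondegenerate_def
proof (intro conjI allI impI)
  show "gen_a m n P i \<noteq> gen_a m n P i'" if "i < m \<and> i' < m \<and> i \<noteq> i'" for i i'
    using that assms(1) induced_hom_gen_a[of i] induced_hom_gen_a[of i'] by (auto simp: inj_on_def)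
  show "gen_b m n P j \<noteq> gen_b m n P j'" if "j < n \<and> j' < n \<and> j \<noteq> j'" for j j'
    using that assms(2) induced_hom_gen_b[of j] induced_hom_gen_b[of j'] by (auto simp: inj_on_def)
qed

end

section \<open>Torsion-free quotients\<close>

lemma N1tor_normal:
  assumes "group Q"
  shows "N1tor Q \<lhd> Q"
proof -
  interpret Q: group Q by fact
  let ?A = "{H. H \<lhd> Q \<and> torsion_elems Q \<subseteq> H}"
  have "carrier Q \<in> ?A"
    by (auto simp: Q.normal_inv_iff Q.subgroup_self torsion_elems_def)
  then have "subgroup (\<Inter> ?A) Q"
    by (intro Q.subgroups_Inter) (auto simp: normal_def)
  moreover have "x \<otimes>\<^bsub>Q\<^esub> h \<otimes>\<^bsub>Q\<^esub> inv\<^bsub>Q\<^esub> x \<in> \<Inter> ?A" if "x \<in> carrier Q" "h \<in> \<Inter> ?A" for x h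
    using that by (blast intro: normal.inv_op_closed2)
  ultimately show ?thesis
    unfolding N1tor_def by (simp add: Q.normal_inv_iff)
qed

lemma N1tor_subset_kernel:
  assumes "group Q" and "group G" and "torsion_free G" and "\<psi> \<in> hom Q G"
  shows "N1tor Q \<subseteq> kernel Q G \<psi>"
proof -
  interpret \<psi>: group_hom Q G \<psi>
    using assms by (simp add: group_hom_def group_hom_axioms_def)
  have "torsion_elems Q \<subseteq> kernel Q G \<psi>"
  proof
    fix x assume "x \<in> torsion_elems Q"
    then obtain k :: nat where x: "x \<in> carrier Q" "k > 0" "x [^]\<^bsub>Q\<^esub> k = \<one>\<^bsub>Q\<^esub>"
      by (auto simp: torsion_elems_def)
    then have "\<psi> x [^]\<^bsub>G\<^esub> k = \<one>\<^bsub>G\<^esub>"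
      by (metis \<psi>.hom_nat_pow \<psi>.hom_one)
    then have "\<psi> x = \<one>\<^bsub>G\<^esub>"
      using \<open>torsion_free G\<close> x \<psi>.hom_closed unfolding torsion_free_def by blast
    then show "x \<in> kernel Q G \<psi>"
      using x by (simp add: kernel_def)
  qed
  then show ?thesis
    unfolding N1tor_def using \<psi>.normal_kernel by blast
qed

lemma Union_N1tor_FactGroup_normal_subset_kernel:
  assumes "group \<Gamma>" and "group G" and "torsion_free G" and F: "F \<in> hom \<Gamma> G"
    and H: "H \<lhd> \<Gamma>" and H_kernel: "H \<subseteq> kernel \<Gamma> G F"
  shows "\<Union> (N1tor (\<Gamma> Mod H)) \<lhd> \<Gamma> \<and> \<Union> (N1tor (\<Gamma> Mod H)) \<subseteq> kernel \<Gamma> G F"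
proof -
  interpret \<Gamma>: group \<Gamma> by fact
  interpret H: normal H \<Gamma> by fact
  interpret F: group_hom \<Gamma> G F
    using assms by (simp add: group_hom_def group_hom_axioms_def)
  have "F x = F y" if x: "x \<in> carrier \<Gamma>" and y: "y \<in> carrier \<Gamma>" and xy: "H #>\<^bsub>\<Gamma>\<^esub> x = H #>\<^bsub>\<Gamma>\<^esub> y" for x y
  proof -
    have "x \<in> H #>\<^bsub>\<Gamma>\<^esub> y"
      using \<Gamma>.rcos_self[OF x H.subgroup_axioms] xy by simp
    then obtain k where "k \<in> H" "x = k \<otimes>\<^bsub>\<Gamma>\<^esub> y"
      unfolding r_coset_def by blast
    with H_kernel y show ?thesis
      by (auto simp: kernel_def)
  qed
  then obtain \<psi> where \<psi>: "\<psi> \<in> hom (\<Gamma> Mod H) G" "\<And>x. x \<in> carrier \<Gamma> \<Longrightarrow> \<psi> (H #>\<^bsub>\<Gamma>\<^esub> x) = F x"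
    using FactGroup_universal[OF F H] by blast
  let ?N = "N1tor (\<Gamma> Mod H)"
  have N_normal: "?N \<lhd> \<Gamma> Mod H"
    by (rule N1tor_normal[OF H.factorgroup_is_group])
  have "?N \<subseteq> kernel (\<Gamma> Mod H) G \<psi>"
    by (rule N1tor_subset_kernel[OF H.factorgroup_is_group \<open>group G\<close> \<open>torsion_free G\<close> \<psi>(1)])
  moreover have "\<Union> ?N = {x \<in> carrier \<Gamma>. H #>\<^bsub>\<Gamma>\<^esub> x \<in> ?N}"
    by (rule H.factgroup_subgroup_union_char[OF normal_imp_subgroup[OF N_normal]])
  ultimately have "\<Union> ?N \<subseteq> kernel \<Gamma> G F"
    using \<psi>(2) by (auto simp: kernel_def)
  then show ?thesis
    using H.factgroup_subgroup_union_normal[OF N_normal] by blast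
qed

lemma Ntor_seq_normal_subset_kernel:
  assumes "group \<Gamma>" and "group G" and "torsion_free G" and "F \<in> hom \<Gamma> G"
  shows "Ntor_seq \<Gamma> (Suc k) \<lhd> \<Gamma> \<and> Ntor_seq \<Gamma> (Suc k) \<subseteq> kernel \<Gamma> G F"
proof (induction k)
  case 0
  then show ?case
    using N1tor_normal[OF assms(1)] N1tor_subset_kernel[OF assms] by simp
next
  case (Suc k)
  then show ?case
    using Union_N1tor_FactGroup_normal_subset_kernel[OF assms] by simp
qed

lemma Ntor_subset_kernel:
  assumes "group \<Gamma>" and "group G" and "torsion_free G" and "F \<in> hom \<Gamma> G"
  shows "Ntor \<Gamma> \<subseteq> kernel \<Gamma> G F"
proof
  fix z assume "z \<in> Ntor \<Gamma>"
  then obtain k where "k \<ge> 1" "z \<in> Ntor_seq \<Gamma> (Suc (k - 1))"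
    by (auto simp: Ntor_def)
  then show "z \<in> kernel \<Gamma> G F"
    using Ntor_seq_normal_subset_kernel[OF assms] by blast
qed

lemma hom_eq_if_phi_tor_eq:
  assumes "group \<Gamma>" and "group G" and "torsion_free G" and "F \<in> hom \<Gamma> G"
    and x: "x \<in> carrier \<Gamma>" and y: "y \<in> carrier \<Gamma>" and xy: "phi_tor \<Gamma> x = phi_tor \<Gamma> y"
  shows "F x = F y"
proof -
  interpret \<Gamma>: group \<Gamma> by fact
  interpret F: group_hom \<Gamma> G F
    using assms by (simp add: group_hom_def group_hom_axioms_def)
  have "subgroup (Ntor_seq \<Gamma> 1) \<Gamma>"
    using Ntor_seq_normal_subset_kernel[OF assms(1-4), of 0] by (simp add: normal_imp_subgroup)
  then have "\<one>\<^bsub>\<Gamma>\<^esub> \<in> Ntor \<Gamma>"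
    unfolding Ntor_def by (blast intro: subgroup.one_closed)
  then have "x \<in> Ntor \<Gamma> #>\<^bsub>\<Gamma>\<^esub> x"
    using x unfolding r_coset_def by force
  then have "x \<in> Ntor \<Gamma> #>\<^bsub>\<Gamma>\<^esub> y"
    using xy by (simp add: phi_tor_def)
  then obtain k where "k \<in> Ntor \<Gamma>" "x = k \<otimes>\<^bsub>\<Gamma>\<^esub> y"
    unfolding r_coset_def by blast
  with Ntor_subset_kernel[OF assms(1-4)] y show ?thesis
    by (auto simp: kernel_def)
qed

context presentation_hom
begin

lemma inj_on_phi_tor_gen_a:
  assumes "torsion_free G" and "inj_on u {0..<m}"
  shows "inj_on (\<lambda>i. phi_tor (Gamma m n P) (gen_a m n P i)) {0..<m}"
proof (rule inj_onI)
  fix i i' assume i: "i \<in> {0..<m}" "i' \<in> {0..<m}"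
    and "phi_tor (Gamma m n P) (gen_a m n P i) = phi_tor (Gamma m n P) (gen_a m n P i')"
  then have "induced_hom (gen_a m n P i) = induced_hom (gen_a m n P i')"
    using i by (intro hom_eq_if_phi_tor_eq[OF Gamma_group group_G assms(1) induced_hom_hom]
        gen_a_carrier) simp_all
  then have "u i = u i'"
    using i by (simp add: induced_hom_gen_a)
  then show "i = i'"
    using assms(2) i by (simp add: inj_on_def)
qed

lemma inj_on_phi_tor_gen_b:
  assumes "torsion_free G" and "inj_on v {0..<n}"
  shows "inj_on (\<lambda>j. phi_tor (Gamma m n P) (gen_b m n P j)) {0..<n}"
proof (rule inj_onI)
  fix j j' assume j: "j \<in> {0..<n}" "j' \<in> {0..<n}"
    and "phi_tor (Gamma m n P) (gen_b m n P j) = phi_tor (Gamma m n P) (gen_b m n P j')"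
  then have "induced_hom (gen_b m n P j) = induced_hom (gen_b m n P j')"
    using j by (intro hom_eq_if_phi_tor_eq[OF Gamma_group group_G assms(1) induced_hom_hom]
        gen_b_carrier) simp_all
  then have "v j = v j'"
    using j by (simp add: induced_hom_gen_b)
  then show "j = j'"
    using assms(2) j by (simp add: inj_on_def)
qed

end

section \<open>Products in the group ring\<close>

lemma gr_mult_eq_sum_pairs:
  fixes a b :: "'g \<Rightarrow> 'k::ring_1"
  assumes "group G" and "finite I" and "finite J"
    and g: "inj_on g I" "g ` I \<subseteq> carrier G" "supp a = g ` I"
    and h: "inj_on h J" "h ` J \<subseteq> carrier G" "supp b = h ` J"
    and x: "x \<in> carrier G"
  shows "gr_mult G a b x = (\<Sum>(i, j)\<in>{(i, j). i \<in> I \<and> j \<in> J \<and> g i \<otimes>\<^bsub>G\<^esub> h j = x}. a (g i) * b (h j))"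
proof -
  interpret G: group G by fact
  have inner: "b (inv\<^bsub>G\<^esub> (g i) \<otimes>\<^bsub>G\<^esub> x) = (\<Sum>j\<in>{j \<in> J. g i \<otimes>\<^bsub>G\<^esub> h j = x}. b (h j))"
    if i: "i \<in> I" for i
  proof -
    define y where "y = inv\<^bsub>G\<^esub> (g i) \<otimes>\<^bsub>G\<^esub> x"
    have gi: "g i \<in> carrier G" using i g(2) by blast
    have "g i \<otimes>\<^bsub>G\<^esub> h j = x \<longleftrightarrow> h j = y" if "j \<in> J" for j
    proof -
      have "h j \<in> carrier G" using that h(2) by blast
      then show ?thesis using gi x G.inv_solve_left[of "h j" "g i" x] by (auto simp: y_def)
    qed
    then have J_y: "{j \<in> J. g i \<otimes>\<^bsub>G\<^esub> h j = x} = {j \<in> J. h j = y}"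
      by auto
    show ?thesis
    proof (cases "y \<in> h ` J")
      case True
      then obtain j0 where "j0 \<in> J" "y = h j0" by auto
      then have "{j \<in> J. h j = y} = {j0}" using h(1) by (auto simp: inj_on_def)
      then show ?thesis using J_y \<open>y = h j0\<close> by (simp add: y_def)
    next
      case False
      then have "b y = 0" using h(3) by (auto simp: supp_def)
      then show ?thesis using False J_y by (auto simp: y_def)
    qed
  qed
  have "gr_mult G a b x = (\<Sum>k\<in>supp a. a k * b (inv\<^bsub>G\<^esub> k \<otimes>\<^bsub>G\<^esub> x))"
    using x by (simp add: gr_mult_def)
  also have "\<dots> = (\<Sum>i\<in>I. a (g i) * b (inv\<^bsub>G\<^esub> (g i) \<otimes>\<^bsub>G\<^esub> x))"
    unfolding g(3) using sum.reindex[OF g(1)] by simp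
  also have "\<dots> = (\<Sum>i\<in>I. \<Sum>j\<in>{j \<in> J. g i \<otimes>\<^bsub>G\<^esub> h j = x}. a (g i) * b (h j))"
    by (rule sum.cong) (simp_all add: inner sum_distrib_left)
  also have "\<dots> = (\<Sum>(i, j)\<in>(SIGMA i:I. {j \<in> J. g i \<otimes>\<^bsub>G\<^esub> h j = x}). a (g i) * b (h j))"
    by (rule sum.Sigma) (use \<open>finite I\<close> \<open>finite J\<close> in auto)
  also have "(SIGMA i:I. {j \<in> J. g i \<otimes>\<^bsub>G\<^esub> h j = x}) = {(i, j). i \<in> I \<and> j \<in> J \<and> g i \<otimes>\<^bsub>G\<^esub> h j = x}"
    by auto
  finally show ?thesis .
qed

definition gr_restrict :: "('g \<Rightarrow> 'k::zero) \<Rightarrow> 'g set \<Rightarrow> 'g \<Rightarrow> 'k" where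
  "gr_restrict a A = (\<lambda>x. if x \<in> A then a x else 0)"

lemma supp_gr_restrict: "supp (gr_restrict a A) = supp a \<inter> A"
  by (auto simp: supp_def gr_restrict_def)

lemma gr_restrict_in_group_ring: "a \<in> group_ring G \<Longrightarrow> gr_restrict a A \<in> group_ring G"
  by (auto simp: group_ring_def supp_gr_restrict)

lemma gr_restrict_eq_self: "supp a \<subseteq> A \<Longrightarrow> gr_restrict a A = a"
  by (auto simp: gr_restrict_def supp_def fun_eq_iff)

lemma gr_mult_eq_one_imp_inverse_in_supp:
  fixes a b :: "'g \<Rightarrow> 'k::ring_1"
  assumes "group G" and "a \<in> group_ring G" and "gr_mult G a b = gr_one G"
  obtains x where "x \<in> supp a" and "inv\<^bsub>G\<^esub> x \<in> supp b"
proof -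
  interpret G: group G by fact
  have "gr_mult G a b \<one>\<^bsub>G\<^esub> = 1"
    using assms(3) by (simp add: gr_one_def)
  then have "(\<Sum>k\<in>supp a. a k * b (inv\<^bsub>G\<^esub> k \<otimes>\<^bsub>G\<^esub> \<one>\<^bsub>G\<^esub>)) \<noteq> 0"
    by (simp add: gr_mult_def)
  then obtain x where x: "x \<in> supp a" "a x * b (inv\<^bsub>G\<^esub> x \<otimes>\<^bsub>G\<^esub> \<one>\<^bsub>G\<^esub>) \<noteq> 0"
    by (meson sum.not_neutral_contains_not_neutral)
  moreover have "x \<in> carrier G"
    using x(1) \<open>a \<in> group_ring G\<close> by (auto simp: group_ring_def)
  ultimately show ?thesis
    using that mult_not_zero[OF x(2)] by (auto simp: supp_def)
qed

section \<open>Sums over blocks of a partition\<close>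

lemma sum_saturated_subset:
  fixes f :: "'a \<Rightarrow> 'b::semiring_1"
  assumes equiv: "equiv S Q" and "finite S" and "T \<subseteq> S" and saturated: "Q `` T \<subseteq> T"
    and "z \<in> S" and blocks: "\<And>E. E \<in> S // Q \<Longrightarrow> sum f E = (if z \<in> E then 1 else 0)"
  shows "sum f T = (if z \<in> T then 1 else 0)"
proof -
  have T_blocks: "T // Q \<subseteq> S // Q"
    using \<open>T \<subseteq> S\<close> unfolding quotient_def by blast
  have block_subset: "E \<subseteq> T" if "E \<in> T // Q" for E
    using that saturated by (auto elim!: quotientE)
  have "finite T"
    using \<open>finite S\<close> \<open>T \<subseteq> S\<close> by (rule finite_subset[rotated])
  have "T \<subseteq> \<Union> (T // Q)"
  proof
    fix p assume "p \<in> T"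
    then have "p \<in> Q `` {p}" and "Q `` {p} \<in> T // Q"
      using equiv_class_self[OF equiv] \<open>T \<subseteq> S\<close> by (auto intro: quotientI)
    then show "p \<in> \<Union> (T // Q)" by blast
  qed
  with block_subset have T_Union: "\<Union> (T // Q) = T"
    by blast
  have "finite (T // Q)"
    using T_blocks finite_quotient[OF \<open>finite S\<close> equiv_type[OF equiv]] by (rule finite_subset)
  have "sum f T = (\<Sum>E\<in>T // Q. sum f E)"
  proof -
    have "\<forall>E\<in>T // Q. finite E"
      using block_subset \<open>finite T\<close> finite_subset by blast
    moreover have "\<forall>E\<in>T // Q. \<forall>E'\<in>T // Q. E \<noteq> E' \<longrightarrow> E \<inter> E' = {}"
      using T_blocks quotient_disj[OF equiv] by (meson subsetD)
    ultimately show ?thesis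
      using sum.Union_disjoint[of "T // Q" f] T_Union by simp
  qed
  also have "\<dots> = (\<Sum>E\<in>T // Q. if E = Q `` {z} then 1 else 0)"
  proof (rule sum.cong)
    fix E assume E: "E \<in> T // Q"
    then obtain p where "p \<in> T" and E_p: "E = Q `` {p}"
      by (auto elim: quotientE)
    then have "z \<in> E \<longleftrightarrow> E = Q `` {z}"
      using eq_equiv_class_iff[OF equiv, of p z] \<open>T \<subseteq> S\<close> \<open>z \<in> S\<close> by auto
    then show "sum f E = (if E = Q `` {z} then 1 else 0)"
      using blocks E T_blocks by auto
  qed simp
  also have "\<dots> = (if Q `` {z} \<in> T // Q then 1 else 0)"
    using \<open>finite (T // Q)\<close> by simp
  also have "Q `` {z} \<in> T // Q \<longleftrightarrow> z \<in> T"
    using block_subset equiv_class_self[OF equiv \<open>z \<in> S\<close>] quotientI[of z T Q] by blast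
  finally show ?thesis .
qed

lemma obtain_minimal_realizable_refinement:
  assumes "is_partition m n P" and "realizable_with m n P r s"
  obtains P' where "is_partition m n P'" and "P' \<subseteq> P" and "realizable_with m n P' r s"
    and "\<And>P''. is_partition m n P'' \<Longrightarrow> P'' \<subset> P' \<Longrightarrow> \<not> realizable_with m n P'' r s"
proof -
  let ?C = "{P'. is_partition m n P' \<and> P' \<subseteq> P \<and> realizable_with m n P' r s}"
  obtain P' where P': "P' \<in> ?C" and least: "\<And>P''. P'' \<in> ?C \<Longrightarrow> card P' \<le> card P''"
    using ex_has_least_nat[of "\<lambda>P'. P' \<in> ?C" P card] assms by blast
  have "P' \<subseteq> S_grid m n \<times> S_grid m n"
    using P' by (simp add: is_partition_def equiv_type)
  then have "finite P'"
    by (rule finite_subset) (simp add: S_grid_def)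
  show thesis
  proof (rule that)
    show "\<not> realizable_with m n P'' r s" if "is_partition m n P''" "P'' \<subset> P'" for P''
    proof
      assume "realizable_with m n P'' r s"
      then have "card P' \<le> card P''"
        using that P' by (intro least) auto
      moreover have "card P'' < card P'"
        using psubset_card_mono[OF \<open>finite P'\<close> \<open>P'' \<subset> P'\<close>] .
      ultimately show False by simp
    qed
  qed (use P' in simp_all)
qed

lemma obtain_enumeration_from:
  assumes "finite A" and "x \<in> A"
  obtains g where "bij_betw g {0..<card A} A" and "g 0 = x"
proof -
  obtain e where e: "bij_betw e {0..<card A} A"
    using ex_bij_betw_nat_finite[OF \<open>finite A\<close>] by blast
  then have "x \<in> e ` {0..<card A}"
    using \<open>x \<in> A\<close> by (simp add: bij_betw_def)
  then obtain k where k: "k < card A" "e k = x"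
    by auto
  have "bij_betw (transpose 0 k) {0..<card A} {0..<card A}"
    using k by simp
  then have "bij_betw (e \<circ> transpose 0 k) {0..<card A} A"
    using e by (rule bij_betw_trans)
  moreover have "(e \<circ> transpose 0 k) 0 = x"
    using k by simp
  ultimately show thesis
    by (rule that)
qed

section \<open>From an inverse pair to a group in \<open>ULIE\<^sup>(\<^sup>2\<^sup>)\<close>\<close>

locale enumerated_inverse_pair =
  fixes G :: "('g, 'm) monoid_scheme" and a b :: "'g \<Rightarrow> 'k::ring_1"
    and m n :: nat and g h :: "nat \<Rightarrow> 'g"
  assumes group_G: "group G"
    and inverse: "gr_mult G a b = gr_one G"
    and supp_a: "bij_betw g {0..<m} (supp a)" and supp_b: "bij_betw h {0..<n} (supp b)"
    and a_in: "a \<in> group_ring G" and b_in: "b \<in> group_ring G"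
    and m_pos: "0 < m" and n_pos: "0 < n"
    and g0_h0: "g 0 \<otimes>\<^bsub>G\<^esub> h 0 = \<one>\<^bsub>G\<^esub>"
begin

interpretation G: group G by (rule group_G)

lemma g_carrier: "i < m \<Longrightarrow> g i \<in> carrier G"
  using supp_a a_in by (auto simp: bij_betw_def group_ring_def)

lemma h_carrier: "j < n \<Longrightarrow> h j \<in> carrier G"
  using supp_b b_in by (auto simp: bij_betw_def group_ring_def)

lemma nonzero_coefficients: "nonzero_params m n (a \<circ> g) (b \<circ> h)"
  using supp_a supp_b by (auto simp: nonzero_params_def bij_betw_def supp_def)

definition product_partition :: "((nat \<times> nat) \<times> (nat \<times> nat)) set" where
  "product_partition = {((i, j), (i', j')). (i, j) \<in> S_grid m n \<and> (i', j') \<in> S_grid m n \<and>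
     g i \<otimes>\<^bsub>G\<^esub> h j = g i' \<otimes>\<^bsub>G\<^esub> h j'}"

lemma product_partition_is_partition: "is_partition m n product_partition"
  unfolding is_partition_def product_partition_def
  by (rule equivI) (auto simp: refl_on_def sym_def trans_def)

lemma gr_rank_restrict_a: "R \<subseteq> {0..<m} \<Longrightarrow> gr_rank (gr_restrict a (g ` R)) = card R"
  using supp_a unfolding gr_rank_def bij_betw_def supp_gr_restrict
  by (metis card_image image_mono inf.absorb2 inj_on_subset)

lemma gr_rank_restrict_b: "C \<subseteq> {0..<n} \<Longrightarrow> gr_rank (gr_restrict b (h ` C)) = card C"
  using supp_b unfolding gr_rank_def bij_betw_def supp_gr_restrict
  by (metis card_image image_mono inf.absorb2 inj_on_subset)

lemma gr_mult_restrict: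
  assumes R: "R \<subseteq> {0..<m}" and C: "C \<subseteq> {0..<n}" and x: "x \<in> carrier G"
  shows "gr_mult G (gr_restrict a (g ` R)) (gr_restrict b (h ` C)) x =
    (\<Sum>(i, j)\<in>{(i, j). i \<in> R \<and> j \<in> C \<and> g i \<otimes>\<^bsub>G\<^esub> h j = x}. a (g i) * b (h j))"
proof -
  have fin: "finite R" "finite C"
    using R C finite_subset by blast+
  have inj: "inj_on g R" "inj_on h C"
    using R C supp_a supp_b inj_on_subset by (auto simp: bij_betw_def)
  have carrier: "g ` R \<subseteq> carrier G" "h ` C \<subseteq> carrier G"
    using R C g_carrier h_carrier by auto
  have "g ` R \<subseteq> supp a" "h ` C \<subseteq> supp b"
    using image_mono[OF R, of g] image_mono[OF C, of h] supp_a supp_b by (simp_all add: bij_betw_def)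
  then have supp: "supp (gr_restrict a (g ` R)) = g ` R" "supp (gr_restrict b (h ` C)) = h ` C"
    by (auto simp: supp_gr_restrict)
  show ?thesis
    unfolding gr_mult_eq_sum_pairs[OF group_G fin(1,2) inj(1) carrier(1) supp(1) inj(2) carrier(2) supp(2) x]
    by (intro sum.cong) (auto simp: gr_restrict_def)
qed

lemma product_partition_realizable: "realizable_with m n product_partition (a \<circ> g) (b \<circ> h)"
  unfolding realizable_with_def
proof
  fix E assume "E \<in> S_grid m n // product_partition"
  then obtain i0 j0 where ij0: "i0 < m" "j0 < n" and E: "E = product_partition `` {(i0, j0)}"
    by (auto simp: S_grid_def elim!: quotientE)
  define x where "x = g i0 \<otimes>\<^bsub>G\<^esub> h j0"
  have "x \<in> carrier G"
    using ij0 g_carrier h_carrier by (simp add: x_def)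
  have E_fiber: "E = {(i, j). i \<in> {0..<m} \<and> j \<in> {0..<n} \<and> g i \<otimes>\<^bsub>G\<^esub> h j = x}"
    using ij0 by (auto simp: E x_def product_partition_def S_grid_def)
  have "(\<Sum>(i, j)\<in>E. (a \<circ> g) i * (b \<circ> h) j) =
      gr_mult G (gr_restrict a (g ` {0..<m})) (gr_restrict b (h ` {0..<n})) x"
    unfolding E_fiber using gr_mult_restrict[OF _ _ \<open>x \<in> carrier G\<close>] by simp
  also have "\<dots> = gr_one G x"
    using supp_a supp_b by (simp add: bij_betw_def gr_restrict_eq_self inverse)
  also have "\<dots> = (if (0, 0) \<in> E then 1 else 0)"
    using E_fiber m_pos n_pos g0_h0 by (auto simp: gr_one_def)
  finally show "(\<Sum>(i, j)\<in>E. (a \<circ> g) i * (b \<circ> h) j) = (if (0, 0) \<in> E then 1 else 0)" .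
qed

lemma invariant_subgrid_inverse_pair:
  assumes P: "is_partition m n P" "P \<subseteq> product_partition" "realizable_with m n P (a \<circ> g) (b \<circ> h)"
    and RC: "invariant_subgrid m n P R C"
  shows "gr_mult G (gr_restrict a (g ` R)) (gr_restrict b (h ` C)) = gr_one G"
proof
  fix x
  have R: "0 \<in> R" "R \<subseteq> {0..<m}" and C: "0 \<in> C" "C \<subseteq> {0..<n}"
    and closed: "\<And>i j i' j'. (i, j) \<in> R \<times> C \<Longrightarrow> ((i, j), (i', j')) \<in> P \<Longrightarrow> (i', j') \<in> R \<times> C"
    using RC unfolding invariant_subgrid_def by blast+
  show "gr_mult G (gr_restrict a (g ` R)) (gr_restrict b (h ` C)) x = gr_one G x"
  proof (cases "x \<in> carrier G")
    case True
    define T where "T = {(i, j). i \<in> R \<and> j \<in> C \<and> g i \<otimes>\<^bsub>G\<^esub> h j = x}"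
    have saturated: "P `` T \<subseteq> T"
    proof
      fix q assume "q \<in> P `` T"
      then obtain i j i' j' where "(i, j) \<in> T" "((i, j), (i', j')) \<in> P" "q = (i', j')"
        by (metis ImageE prod.exhaust)
      moreover from this have "g i \<otimes>\<^bsub>G\<^esub> h j = g i' \<otimes>\<^bsub>G\<^esub> h j'"
        using P(2) by (auto simp: product_partition_def)
      ultimately show "q \<in> T"
        using closed[of i j i' j'] by (auto simp: T_def)
    qed
    have T_grid: "T \<subseteq> S_grid m n"
      using R C by (auto simp: T_def S_grid_def)
    have grid: "equiv (S_grid m n) P" "finite (S_grid m n)" "(0, 0) \<in> S_grid m n"
      using P(1) m_pos n_pos by (simp_all add: is_partition_def S_grid_def)
    have blocks: "(\<Sum>(i, j)\<in>E. a (g i) * b (h j)) = (if (0, 0) \<in> E then 1 else 0)"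
      if "E \<in> S_grid m n // P" for E
      using P(3) that by (simp add: realizable_with_def)
    have "gr_mult G (gr_restrict a (g ` R)) (gr_restrict b (h ` C)) x = (\<Sum>(i, j)\<in>T. a (g i) * b (h j))"
      unfolding T_def by (rule gr_mult_restrict[OF R(2) C(2) True])
    also have "\<dots> = (if (0, 0) \<in> T then 1 else 0)"
      by (rule sum_saturated_subset[OF grid(1,2) T_grid saturated grid(3) blocks])
    also have "(0, 0) \<in> T \<longleftrightarrow> x = \<one>\<^bsub>G\<^esub>"
      using R(1) C(1) g0_h0 by (auto simp: T_def)
    finally show ?thesis
      by (simp add: gr_one_def)
  next
    case False
    then show ?thesis
      by (auto simp: gr_mult_def gr_one_def)
  qed
qed

lemma presentation_hom_conjugate:
  assumes "P \<subseteq> product_partition"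
  shows "presentation_hom m n P G (\<lambda>i. inv\<^bsub>G\<^esub> (g 0) \<otimes>\<^bsub>G\<^esub> g i) (\<lambda>j. h j \<otimes>\<^bsub>G\<^esub> g 0)"
proof (intro presentation_hom.intro presentation.intro presentation_hom_axioms.intro)
  show "0 < m" "0 < n" "group G"
    by (fact m_pos n_pos group_G)+
  show "P \<subseteq> S_grid m n \<times> S_grid m n"
    using assms by (auto simp: product_partition_def)
  show "inv\<^bsub>G\<^esub> (g 0) \<otimes>\<^bsub>G\<^esub> g i \<in> carrier G" if "i < m" for i
    using that m_pos g_carrier by simp
  show "h j \<otimes>\<^bsub>G\<^esub> g 0 \<in> carrier G" if "j < n" for j
    using that m_pos g_carrier h_carrier by simp
  show "inv\<^bsub>G\<^esub> (g 0) \<otimes>\<^bsub>G\<^esub> g 0 = \<one>\<^bsub>G\<^esub>"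
    using m_pos g_carrier by simp
  show "h 0 \<otimes>\<^bsub>G\<^esub> g 0 = \<one>\<^bsub>G\<^esub>"
    using g0_h0 m_pos n_pos g_carrier h_carrier by (simp add: G.inv_comm)
  show "inv\<^bsub>G\<^esub> (g 0) \<otimes>\<^bsub>G\<^esub> g i \<otimes>\<^bsub>G\<^esub> (h j \<otimes>\<^bsub>G\<^esub> g 0) = inv\<^bsub>G\<^esub> (g 0) \<otimes>\<^bsub>G\<^esub> g i' \<otimes>\<^bsub>G\<^esub> (h j' \<otimes>\<^bsub>G\<^esub> g 0)"
    if "((i, j), (i', j')) \<in> P" for i j i' j'
  proof -
    have "i < m" "j < n" "i' < m" "j' < n" and eq: "g i \<otimes>\<^bsub>G\<^esub> h j = g i' \<otimes>\<^bsub>G\<^esub> h j'"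
      using that assms by (auto simp: product_partition_def S_grid_def)
    have "inv\<^bsub>G\<^esub> (g 0) \<otimes>\<^bsub>G\<^esub> (g i \<otimes>\<^bsub>G\<^esub> h j) \<otimes>\<^bsub>G\<^esub> g 0 =
        inv\<^bsub>G\<^esub> (g 0) \<otimes>\<^bsub>G\<^esub> (g i' \<otimes>\<^bsub>G\<^esub> h j') \<otimes>\<^bsub>G\<^esub> g 0"
      by (simp only: eq)
    then show ?thesis
      using \<open>i < m\<close> \<open>j < n\<close> \<open>i' < m\<close> \<open>j' < n\<close> m_pos g_carrier h_carrier
      by (simp add: G.m_assoc)
  qed
qed

lemma inj_on_conjugate_g: "inj_on (\<lambda>i. inv\<^bsub>G\<^esub> (g 0) \<otimes>\<^bsub>G\<^esub> g i) {0..<m}"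
  using supp_a m_pos g_carrier by (auto simp: bij_betw_def inj_on_def)

lemma inj_on_conjugate_h: "inj_on (\<lambda>j. h j \<otimes>\<^bsub>G\<^esub> g 0) {0..<n}"
  using supp_b m_pos g_carrier h_carrier by (auto simp: bij_betw_def inj_on_def)

lemma obtain_ULIE2_refinement:
  assumes "torsion_free G"
    and minimal: "\<And>a' b' :: 'g \<Rightarrow> 'k. a' \<in> group_ring G \<Longrightarrow> b' \<in> group_ring G \<Longrightarrow>
        gr_mult G a' b' = gr_one G \<Longrightarrow> 2 \<le> gr_rank a' \<Longrightarrow> gr_rank a' \<le> m \<Longrightarrow>
        2 \<le> gr_rank b' \<Longrightarrow> gr_rank b' \<le> n \<Longrightarrow> m + n \<le> gr_rank a' + gr_rank b'"
  obtains P where "ULIE2 TYPE('k) m n P"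
    and "inj_on (\<lambda>i. phi_tor (Gamma m n P) (gen_a m n P i)) {0..<m}"
    and "inj_on (\<lambda>j. phi_tor (Gamma m n P) (gen_b m n P j)) {0..<n}"
proof -
  obtain P where P: "is_partition m n P" "P \<subseteq> product_partition" "realizable_with m n P (a \<circ> g) (b \<circ> h)"
    and P_min: "\<And>P'. is_partition m n P' \<Longrightarrow> P' \<subset> P \<Longrightarrow> \<not> realizable_with m n P' (a \<circ> g) (b \<circ> h)"
    using obtain_minimal_realizable_refinement[OF product_partition_is_partition product_partition_realizable]
    by blast
  interpret presentation_hom m n P G "\<lambda>i. inv\<^bsub>G\<^esub> (g 0) \<otimes>\<^bsub>G\<^esub> g i" "\<lambda>j. h j \<otimes>\<^bsub>G\<^esub> g 0"
    by (rule presentation_hom_conjugate[OF P(2)])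
  have "\<not> proper_subgrid m n R C" if RC: "invariant_subgrid m n P R C" for R C
  proof -
    have R: "R \<subseteq> {0..<m}" "2 \<le> card R" and C: "C \<subseteq> {0..<n}" "2 \<le> card C"
      using RC unfolding invariant_subgrid_def by blast+
    then have "card R \<le> m" "card C \<le> n"
      using card_mono[of "{0..<m}" R] card_mono[of "{0..<n}" C] by simp_all
    moreover have "m + n \<le> card R + card C"
      using minimal[OF gr_restrict_in_group_ring[OF a_in] gr_restrict_in_group_ring[OF b_in]
          invariant_subgrid_inverse_pair[OF P RC]] R C \<open>card R \<le> m\<close> \<open>card C \<le> n\<close>
      by (simp add: gr_rank_restrict_a gr_rank_restrict_b)
    ultimately show ?thesis
      by (simp add: proper_subgrid_def)
  qed
  moreover have "minimally_realizable TYPE('k) m n P"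
    unfolding minimally_realizable_def using nonzero_coefficients P(3) P_min by blast
  ultimately have "ULIE2 TYPE('k) m n P"
    using P(1) nondegenerate_if_inj[OF inj_on_conjugate_g inj_on_conjugate_h] by (simp add: ULIE2_def)
  then show thesis
    using inj_on_phi_tor_gen_a[OF \<open>torsion_free G\<close> inj_on_conjugate_g]
      inj_on_phi_tor_gen_b[OF \<open>torsion_free G\<close> inj_on_conjugate_h] by (rule that)
qed

end

lemma minimal_inverse_pair_ULIE2:
  fixes a b :: "'g \<Rightarrow> 'k::ring_1"
  assumes "group G" and "torsion_free G"
    and a: "a \<in> group_ring G" and b: "b \<in> group_ring G" and ab: "gr_mult G a b = gr_one G"
    and minimal: "\<And>a' b' :: 'g \<Rightarrow> 'k. a' \<in> group_ring G \<Longrightarrow> b' \<in> group_ring G \<Longrightarrow>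
        gr_mult G a' b' = gr_one G \<Longrightarrow> 2 \<le> gr_rank a' \<Longrightarrow> gr_rank a' \<le> gr_rank a \<Longrightarrow>
        2 \<le> gr_rank b' \<Longrightarrow> gr_rank b' \<le> gr_rank b \<Longrightarrow> gr_rank a + gr_rank b \<le> gr_rank a' + gr_rank b'"
  defines "m \<equiv> gr_rank a" and "n \<equiv> gr_rank b"
  obtains P where "ULIE2 TYPE('k) m n P"
    and "inj_on (\<lambda>i. phi_tor (Gamma m n P) (gen_a m n P i)) {0..<m}"
    and "inj_on (\<lambda>j. phi_tor (Gamma m n P) (gen_b m n P j)) {0..<n}"
proof -
  obtain x where x: "x \<in> supp a" "inv\<^bsub>G\<^esub> x \<in> supp b"
    using gr_mult_eq_one_imp_inverse_in_supp[OF \<open>group G\<close> a ab] .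
  have fin: "finite (supp a)" "finite (supp b)"
    using a b by (auto simp: group_ring_def)
  obtain g where g: "bij_betw g {0..<m} (supp a)" "g 0 = x"
    using obtain_enumeration_from[OF fin(1) x(1)] unfolding m_def gr_rank_def .
  obtain h where h: "bij_betw h {0..<n} (supp b)" "h 0 = inv\<^bsub>G\<^esub> x"
    using obtain_enumeration_from[OF fin(2) x(2)] unfolding n_def gr_rank_def .
  have "0 < m" "0 < n"
    using fin x by (auto simp: m_def n_def gr_rank_def card_gt_0_iff)
  moreover have "x \<otimes>\<^bsub>G\<^esub> inv\<^bsub>G\<^esub> x = \<one>\<^bsub>G\<^esub>"
    using x(1) a \<open>group G\<close> by (auto simp: group_ring_def intro: group.r_inv)
  ultimately interpret enumerated_inverse_pair G a b m n g h
    using \<open>group G\<close> ab g h a b by (intro enumerated_inverse_pair.intro) simp_all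
  show thesis
    using obtain_ULIE2_refinement[OF \<open>torsion_free G\<close> minimal[folded m_def n_def]] that by blast
qed

theorem theorem6p11:
  fixes M N :: nat
    and G :: "('g, 'm) monoid_scheme"
  assumes "M \<ge> 2" and "N \<ge> 2"
    and hyp: "\<forall>m n P. 2 \<le> m \<and> m \<le> M \<and> 2 \<le> n \<and> n \<le> N \<and> ULIE2 TYPE('k::division_ring) m n P \<longrightarrow>
        (\<exists>i i'. i < i' \<and> i' < m \<and>
            phi_tor (Gamma m n P) (gen_a m n P i) = phi_tor (Gamma m n P) (gen_a m n P i')) \<or>
        (\<exists>j j'. j < j' \<and> j' < n \<and>
            phi_tor (Gamma m n P) (gen_b m n P j) = phi_tor (Gamma m n P) (gen_b m n P j'))"
    and "group G" and "torsion_free G"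
  shows "\<not> (\<exists>a b :: 'g \<Rightarrow> 'k. a \<in> group_ring G \<and> b \<in> group_ring G \<and>
            gr_rank a = M \<and> gr_rank b = N \<and> gr_mult G a b = gr_one G)"
proof
  define pair where "pair a b \<longleftrightarrow> a \<in> group_ring G \<and> b \<in> group_ring G \<and> gr_mult G a b = gr_one G \<and>
      2 \<le> gr_rank a \<and> gr_rank a \<le> M \<and> 2 \<le> gr_rank b \<and> gr_rank b \<le> N" for a b :: "'g \<Rightarrow> 'k"
  assume "\<exists>a b :: 'g \<Rightarrow> 'k. a \<in> group_ring G \<and> b \<in> group_ring G \<and>
            gr_rank a = M \<and> gr_rank b = N \<and> gr_mult G a b = gr_one G"
  then obtain a0 b0 where "pair a0 b0"
    using assms(1,2) by (auto simp: pair_def)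
  then obtain a b where ab: "pair a b"
    and least: "\<And>a' b'. pair a' b' \<Longrightarrow> gr_rank a + gr_rank b \<le> gr_rank a' + gr_rank b'"
    using ex_has_least_nat[of "\<lambda>(a, b). pair a b" "(a0, b0)" "\<lambda>(a, b). gr_rank a + gr_rank b"]
    by auto
  define m n where "m = gr_rank a" and "n = gr_rank b"
  have "m + n \<le> gr_rank a' + gr_rank b'"
    if "a' \<in> group_ring G" "b' \<in> group_ring G" "gr_mult G a' b' = gr_one G"
      "2 \<le> gr_rank a'" "gr_rank a' \<le> m" "2 \<le> gr_rank b'" "gr_rank b' \<le> n"
    for a' b' :: "'g \<Rightarrow> 'k"
    using that ab by (intro least[unfolded m_def[symmetric] n_def[symmetric]]) (auto simp: pair_def m_def n_def)
  then obtain P where ULIE2: "ULIE2 TYPE('k) m n P"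
    and inj_a: "inj_on (\<lambda>i. phi_tor (Gamma m n P) (gen_a m n P i)) {0..<m}"
    and inj_b: "inj_on (\<lambda>j. phi_tor (Gamma m n P) (gen_b m n P j)) {0..<n}"
    using minimal_inverse_pair_ULIE2[OF \<open>group G\<close> \<open>torsion_free G\<close>, of a b] ab
    unfolding pair_def m_def n_def by blast
  have "2 \<le> m \<and> m \<le> M \<and> 2 \<le> n \<and> n \<le> N \<and> ULIE2 TYPE('k) m n P"
    using ULIE2 ab by (simp add: pair_def m_def n_def)
  from hyp[rule_format, OF this] show False
    by (elim disjE exE conjE) (auto dest: inj_onD[OF inj_a] inj_onD[OF inj_b])
qed

end
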